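(* Let $\lambda \geq 0$, $0 \leq \gamma \leq 1$, $0\leq \beta<1$, $\tau \in \mathbb{C}\setminus\{0\}$ and $m \in \mathbb{N}$. Let $f(z)=z+\sum_{k=1}^{\infty} a_{mk+1}z^{mk+1}$ belong to $\Theta_{\Sigma_m}(\tau,\lambda,\gamma,0;\beta)$ (the case $\delta=0$). Then $$|a_{m+1}| \leq \min\left\{\frac{2|\tau|(1-\beta)}{1+m(\lambda+\gamma)+\lambda\gamma\left((m+1)^2+1\right)},\ 2\sqrt{\frac{|\tau|(1-\beta)}{(m+1)\left(1+2m(\lambda+\gamma)+\lambda\gamma\left((2m+1)^2+1\right)\right)}}\right\}$$ and $$|a_{2m+1}| \leq \frac{2|\tau|(1-\beta)}{1+2m(\lambda+\gamma)+\lambda\gamma\left((2m+1)^2+1\right)}.$$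
   Context: Let $\mathbb{U}=\{z\in\mathbb{C}:|z|<1\}$ and $m\in\mathbb{N}$. $\mathcal{A}_m$ denotes the class of functions analytic in $\mathbb{U}$ of the form $f(z)=z+\sum_{k=1}^{\infty}a_{mk+1}z^{mk+1}$. $\Sigma_m$ denotes the class of $m$-fold symmetric bi-univalent functions: functions $f\in\mathcal{A}_m$ univalent in $\mathbb{U}$ whose inverse $f^{-1}$ extends to a univalent function $g$ on $\mathbb{U}$; this $g$ has the expansion $g(w)=w-a_{m+1}w^{m+1}+\left[(m+1)a_{m+1}^2-a_{2m+1}\right]w^{2m+1}-\cdots$. For $\delta\in\mathbb{N}_0$ and $h(z)=z+\sum_{k\ge1}c_{mk+1}z^{mk+1}$ analytic in $\mathbb{U}$, the $m$-fold Ruscheweyh derivative is $\mathcal{R}^\delta h(z)=z+\sum_{k=1}^{\infty}\frac{\Gamma(\delta+k+1)}{\Gamma(k+1)\Gamma(\delta+1)}c_{mk+1}z^{mk+1}$ (for $\delta=0$ it is the identity). For such $h$ and parameters $\lambda,\gamma,\tau\neq0,\delta$, put $$J_h(z)=1+\frac{1}{\tau}\Big[(1-\lambda)(1-\gamma)\frac{\mathcal{R}^\delta h(z)}{z}+(\lambda(\gamma+1)+\gamma)(\mathcal{R}^\delta h)'(z)+\lambda\gamma\big(z(\mathcal{R}^\delta h)''(z)-2\big)-1\Big].$$ For $0\le\beta<1$, $\Theta_{\Sigma_m}(\tau,\lambda,\gamma,\delta;\beta)$ is the set of $f\in\Sigma_m$ such that $\operatorname{Re}J_f(z)>\beta$ for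 all $z\in\mathbb{U}$ and $\operatorname{Re}J_g(w)>\beta$ for all $w\in\mathbb{U}$, where $g$ is the extension of $f^{-1}$ to $\mathbb{U}$. *)

theory Defs
  imports "HOL-Analysis.Analysis"
begin

abbreviation unit_disc :: "complex set" where
  "unit_disc \<equiv> ball 0 1"

definition mfold_expansion :: "nat \<Rightarrow> (nat \<Rightarrow> complex) \<Rightarrow> (complex \<Rightarrow> complex) \<Rightarrow> bool" where
  "mfold_expansion m a f \<longleftrightarrow>
     (\<forall>z\<in>unit_disc. (\<lambda>k. a (m * Suc k + 1) * z ^ (m * Suc k + 1)) sums (f z - z))"

definition class_A :: "nat \<Rightarrow> (complex \<Rightarrow> complex) \<Rightarrow> bool" where
  "class_A m f \<longleftrightarrow> f holomorphic_on unit_disc \<and> (\<exists>a. mfold_expansion m a f)"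

definition inverse_extension :: "(complex \<Rightarrow> complex) \<Rightarrow> (complex \<Rightarrow> complex) \<Rightarrow> bool" where
  "inverse_extension f g \<longleftrightarrow>
     g holomorphic_on unit_disc \<and> inj_on g unit_disc \<and>
     (\<forall>z\<in>unit_disc. f z \<in> unit_disc \<longrightarrow> g (f z) = z)"

definition Sigma_m :: "nat \<Rightarrow> (complex \<Rightarrow> complex) \<Rightarrow> bool" where
  "Sigma_m m f \<longleftrightarrow> class_A m f \<and> inj_on f unit_disc \<and> (\<exists>g. inverse_extension f g)"

definition taylor_coeff :: "(complex \<Rightarrow> complex) \<Rightarrow> nat \<Rightarrow> complex" where
  "taylor_coeff h n = (deriv ^^ n) h 0 / of_nat (fact n)"

text \<open>m-fold Ruscheweyh derivative; for \<delta> = 0 it is the identity (as stipulated).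
  Gamma(\<delta>+k+1)/(Gamma(k+1) Gamma(\<delta>+1)) = (\<delta>+k choose k).\<close>
definition ruscheweyh :: "nat \<Rightarrow> nat \<Rightarrow> (complex \<Rightarrow> complex) \<Rightarrow> complex \<Rightarrow> complex" where
  "ruscheweyh m \<delta> h =
     (if \<delta> = 0 then h
      else (\<lambda>z. z + (\<Sum>k. of_nat ((\<delta> + Suc k) choose Suc k) * taylor_coeff h (m * Suc k + 1)
                            * z ^ (m * Suc k + 1))))"

text \<open>h(z)/z, with its removable value h'(0) at z = 0.\<close>
definition div_z :: "(complex \<Rightarrow> complex) \<Rightarrow> complex \<Rightarrow> complex" where
  "div_z h z = (if z = 0 then deriv h 0 else h z / z)"

definition J_fun :: "nat \<Rightarrow> complex \<Rightarrow> real \<Rightarrow> real \<Rightarrow> nat \<Rightarrow> (complex \<Rightarrow> complex) \<Rightarrow> complex \<Rightarrow> complex" where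
  "J_fun m \<tau> lam \<gamma> \<delta> h z =
     (let R = ruscheweyh m \<delta> h in
      1 + (1 / \<tau>) * (of_real ((1 - lam) * (1 - \<gamma>)) * div_z R z
                     + of_real (lam * (\<gamma> + 1) + \<gamma>) * deriv R z
                     + of_real (lam * \<gamma>) * (z * deriv (deriv R) z - 2) - 1))"

definition Theta :: "nat \<Rightarrow> complex \<Rightarrow> real \<Rightarrow> real \<Rightarrow> nat \<Rightarrow> real \<Rightarrow> (complex \<Rightarrow> complex) \<Rightarrow> bool" where
  "Theta m \<tau> lam \<gamma> \<delta> \<beta> f \<longleftrightarrow>
     class_A m f \<and> inj_on f unit_disc \<and>
     (\<exists>g. inverse_extension f g \<and>
          (\<forall>z\<in>unit_disc. Re (J_fun m \<tau> lam \<gamma> \<delta> f z) > \<beta>) \<and>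
          (\<forall>w\<in>unit_disc. Re (J_fun m \<tau> lam \<gamma> \<delta> g w) > \<beta>))"

end

theory Submission
  imports Defs "HOL-Complex_Analysis.Complex_Analysis"
begin

(* For \<delta> = 0 the functional J_h is affine in the Taylor coefficients of h: its n-th
   coefficient is J_weight n * h_(n+1) / \<tau>.  So p = (J_h - \<beta>) / (1 - \<beta>) has positive real
   part and p(0) = 1, and Caratheodory's lemma |p_n| <= 2 bounds the coefficients of f and of
   g = f^-1.  (Caratheodory's lemma is reduced, by averaging p over the rotations by n-th roots
   of unity, to the case p_1 = ... = p_(n-1) = 0, where p_n / 2 is the n-th coefficient of
   (p - 1) / (p + 1), a function bounded by 1.)  With n = m and n = 2m this bounds a_(m+1) and
   a_(2m+1).  Solving g(f(z)) = z modulo z^(2m+2) shows that the (2m+1)-st coefficient of g is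
   (m+1) a_(m+1)^2 - a_(2m+1); bounding it with n = 2m and adding the bound on a_(2m+1) gives
   the square-root estimate for a_(m+1). *)

unbundle no vec_syntax

section \<open>Power series modulo powers of X\<close>

lemma fps_X_power_dvd_iff: "fps_X ^ k dvd (f :: 'a::comm_ring_1 fps) \<longleftrightarrow> (\<forall>j<k. f $ j = 0)"
proof
  assume "fps_X ^ k dvd f"
  then obtain g where "f = fps_X ^ k * g" by (elim dvdE)
  then show "\<forall>j<k. f $ j = 0" by (simp add: fps_X_power_mult_nth)
next
  assume low: "\<forall>j<k. f $ j = 0"
  show "fps_X ^ k dvd f"
  proof (cases "f = 0")
    case False
    then have "k \<le> subdegree f" using low by (intro subdegree_geI) auto
    then have "f = fps_shift k f * fps_X ^ k" by (rule fps_shift_times_fps_X_power[symmetric])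
    then show ?thesis by (metis dvd_triv_right)
  qed simp
qed

lemma square_dvd_one_plus_power: "u\<^sup>2 dvd (1 + u) ^ n - 1 - of_nat n * (u :: 'a::comm_ring_1)"
proof (induction n)
  case (Suc n)
  have "(1 + u) ^ Suc n - 1 - of_nat (Suc n) * u
      = (1 + u) * ((1 + u) ^ n - 1 - of_nat n * u) + of_nat n * u\<^sup>2"
    by (simp add: algebra_simps power2_eq_square)
  with Suc show ?case by (simp add: dvd_add)
qed simp

lemma fps_X_one_plus_power_mod:
  fixes c :: "'a::comm_ring_1" and V :: "'a fps"
  shows "fps_X ^ (k + 2*m) dvd
           (fps_X * (1 + fps_const c * fps_X ^ m + fps_X ^ (2*m) * V)) ^ k
           - (fps_X ^ k + of_nat k * fps_const c * fps_X ^ (k + m))"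
proof -
  define u where "u = fps_const c * fps_X ^ m + fps_X ^ (2*m) * V"
  have "fps_X ^ m dvd u"
    by (simp add: u_def mult_2 power_add dvd_add)
  then have "fps_X ^ (2*m) dvd u\<^sup>2"
    using dvd_power_same[of _ u 2] by (simp add: power_mult mult.commute)
  then have "fps_X ^ (2*m) dvd (1 + u) ^ k - 1 - of_nat k * u"
    using square_dvd_one_plus_power dvd_trans by blast
  then have "fps_X ^ (k + 2*m) dvd fps_X ^ k * ((1 + u) ^ k - 1 - of_nat k * u)"
    unfolding power_add by (rule mult_dvd_mono[OF dvd_refl])
  moreover have "(fps_X * (1 + fps_const c * fps_X ^ m + fps_X ^ (2*m) * V)) ^ k
        - (fps_X ^ k + of_nat k * fps_const c * fps_X ^ (k + m))
      = fps_X ^ k * ((1 + u) ^ k - 1 - of_nat k * u) + fps_X ^ (k + 2*m) * (of_nat k * V)"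
    by (simp only: power_mult_distrib) (simp add: u_def algebra_simps power_add)
  ultimately show ?thesis
    by (simp only: dvd_add dvd_triv_left)
qed

lemma fps_X_power_dvd_compose_iff:
  fixes D F :: "'a::idom fps"
  assumes "F $ 0 = 0" and "F $ 1 \<noteq> 0"
  shows "fps_X ^ k dvd (D oo F) \<longleftrightarrow> fps_X ^ k dvd D"
proof (cases "D = 0")
  case False
  have "subdegree F = 1"
    using assms by (intro subdegreeI) auto
  then have "subdegree (D oo F) = subdegree D"
    using assms(1) by simp
  moreover have "D oo F \<noteq> 0"
    using False assms by (auto simp: fps_compose_eq_0_iff)
  moreover have "(\<forall>j<k. E $ j = 0) \<longleftrightarrow> k \<le> subdegree E" if "E \<noteq> 0" for E :: "'a fps"
    using that by (metis leI nth_less_subdegree_zero nth_subdegree_nonzero order_less_le_trans subdegree_geI)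
  ultimately show ?thesis
    using False by (simp add: fps_X_power_dvd_iff)
qed simp

lemma fps_three_term_powers_mod:
  fixes F :: "'a::comm_ring_1 fps" and a b :: 'a
  assumes m: "m \<ge> 1"
    and F: "fps_X ^ (2*m+2) dvd
              F - (fps_X + fps_const a * fps_X ^ (m+1) + fps_const b * fps_X ^ (2*m+1))"
  shows "fps_X ^ (2*m+2) dvd F ^ (m+1) - (fps_X ^ (m+1) + of_nat (m+1) * fps_const a * fps_X ^ (2*m+1))"
    and "fps_X ^ (2*m+2) dvd F ^ (2*m+1) - fps_X ^ (2*m+1)"
proof -
  define X :: "'a fps" where "X = fps_X"
  define A where "A = fps_const a"
  obtain R where "F - (X + A * X ^ (m+1) + fps_const b * X ^ (2*m+1)) = X ^ (2*m+2) * R"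
    using F unfolding X_def A_def by (elim dvdE)
  then have F_eq: "F = X * (1 + A * X ^ m + X ^ (2*m) * (fps_const b + X * R))"
    by (simp add: algebra_simps power_add eq_diff_eq)
  note F_power = fps_X_one_plus_power_mod[of _ m a "fps_const b + X * R", folded X_def A_def, folded F_eq]
  have dvd_mono: "X ^ k dvd E \<Longrightarrow> 2*m+2 \<le> k \<Longrightarrow> X ^ (2*m+2) dvd E" for k E
    using le_imp_power_dvd dvd_trans by blast
  have "X ^ (2*m+2) dvd F ^ (m+1) - (X ^ (m+1) + of_nat (m+1) * A * X ^ (2*m+1))"
  proof (rule dvd_mono)
    have "(m+1) + m = 2*m+1"
      by simp
    then show "X ^ ((m+1) + 2*m) dvd F ^ (m+1) - (X ^ (m+1) + of_nat (m+1) * A * X ^ (2*m+1))"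
      using F_power[of "m+1"] by (simp only:)
  qed (use m in simp)
  then show "fps_X ^ (2*m+2) dvd F ^ (m+1) - (fps_X ^ (m+1) + of_nat (m+1) * fps_const a * fps_X ^ (2*m+1))"
    by (simp only: X_def A_def)
  have "X ^ (2*m+2) dvd F ^ (2*m+1) - (X ^ (2*m+1) + of_nat (2*m+1) * A * X ^ (3*m+1))"
  proof (rule dvd_mono)
    have "(2*m+1) + m = 3*m+1"
      by simp
    then show "X ^ ((2*m+1) + 2*m) dvd F ^ (2*m+1) - (X ^ (2*m+1) + of_nat (2*m+1) * A * X ^ (3*m+1))"
      using F_power[of "2*m+1"] by (simp only:)
  qed (use m in simp)
  moreover have "X ^ (2*m+2) dvd of_nat (2*m+1) * A * X ^ (3*m+1)"
    using dvd_mono[OF dvd_refl, of "3*m+1"] m by (simp add: dvd_mult)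
  ultimately have "X ^ (2*m+2) dvd
      (F ^ (2*m+1) - (X ^ (2*m+1) + of_nat (2*m+1) * A * X ^ (3*m+1))) + of_nat (2*m+1) * A * X ^ (3*m+1)"
    by (rule dvd_add)
  then show "fps_X ^ (2*m+2) dvd F ^ (2*m+1) - fps_X ^ (2*m+1)"
    by (simp add: X_def)
qed

lemma truncated_inverse_compose:
  fixes F :: "'a::idom fps" and a b :: 'a
  assumes m: "m \<ge> 1"
    and F: "fps_X ^ (2*m+2) dvd
              F - (fps_X + fps_const a * fps_X ^ (m+1) + fps_const b * fps_X ^ (2*m+1))"
  shows "fps_X ^ (2*m+2) dvd
           ((fps_X - fps_const a * fps_X ^ (m+1)
             + fps_const (of_nat (m+1) * a\<^sup>2 - b) * fps_X ^ (2*m+1)) oo F) - fps_X"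
proof -
  define X :: "'a fps" where "X = fps_X"
  define A B C where "A = fps_const a" and "B = fps_const b"
    and "C = fps_const (of_nat (m+1) * a\<^sup>2 - b)"
  have C: "C = of_nat (m+1) * A\<^sup>2 - B"
    by (simp only: A_def B_def C_def fps_of_nat[symmetric] fps_const_power fps_const_mult fps_const_sub)
  note F' = F[folded X_def A_def B_def]
  note powers = fps_three_term_powers_mod[OF m F, folded X_def A_def]
  have F0: "F $ 0 = 0"
    using F unfolding fps_X_power_dvd_iff by (auto dest: spec[of _ 0])
  have "(X - A * X ^ (m+1) + C * X ^ (2*m+1)) oo F = F - A * F ^ (m+1) + C * F ^ (2*m+1)"
    by (simp only: X_def A_def C_def fps_compose_add_distrib fps_compose_sub_distrib
        fps_const_mult_apply_left[symmetric] fps_X_power_compose[OF F0] fps_X_fps_compose_startby0[OF F0])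
  then have "((X - A * X ^ (m+1) + C * X ^ (2*m+1)) oo F) - X
      = (F - (X + A * X ^ (m+1) + B * X ^ (2*m+1)))
        - A * (F ^ (m+1) - (X ^ (m+1) + of_nat (m+1) * A * X ^ (2*m+1)))
        + C * (F ^ (2*m+1) - X ^ (2*m+1))"
    by (simp add: C algebra_simps power2_eq_square)
  then have "X ^ (2*m+2) dvd ((X - A * X ^ (m+1) + C * X ^ (2*m+1)) oo F) - X"
    using F' powers by (simp only: dvd_add dvd_diff dvd_mult)
  then show ?thesis
    by (simp only: X_def A_def C_def)
qed

lemma fps_compose_left_inverse_coeffs:
  fixes F G :: "'a::idom fps" and a b :: 'a
  assumes m: "m \<ge> 1" and GF: "G oo F = fps_X"
    and F: "fps_X ^ (2*m+2) dvd
              F - (fps_X + fps_const a * fps_X ^ (m+1) + fps_const b * fps_X ^ (2*m+1))"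
  shows "fps_X ^ (2*m+2) dvd
           G - (fps_X - fps_const a * fps_X ^ (m+1)
                + fps_const (of_nat (m+1) * a\<^sup>2 - b) * fps_X ^ (2*m+1))"
proof -
  define H where "H = fps_X - fps_const a * fps_X ^ (m+1)
                      + fps_const (of_nat (m+1) * a\<^sup>2 - b) * fps_X ^ (2*m+1)"
  have low: "(F - (fps_X + fps_const a * fps_X ^ (m+1) + fps_const b * fps_X ^ (2*m+1))) $ j = 0"
    if "j \<le> 1" for j
    using F that unfolding fps_X_power_dvd_iff by simp
  have F0: "F $ 0 = 0" and F1: "F $ 1 \<noteq> 0"
    using low[of 0] low[of 1] m by simp_all
  have "(G - H) oo F = - ((H oo F) - fps_X)"
    by (simp add: fps_compose_sub_distrib GF)
  moreover have "fps_X ^ (2*m+2) dvd (H oo F) - fps_X"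
    unfolding H_def using m F by (rule truncated_inverse_compose)
  ultimately have "fps_X ^ (2*m+2) dvd (G - H) oo F"
    by (simp only: dvd_minus_iff)
  then show ?thesis
    unfolding H_def[symmetric] using fps_X_power_dvd_compose_iff[OF F0 F1] by blast
qed

section \<open>Caratheodory's coefficient bound\<close>

lemma norm_fps_nth_bound:
  fixes f :: "complex \<Rightarrow> complex"
  assumes hol: "f holomorphic_on ball 0 r" and r: "r > 0"
    and bound: "\<And>z. z \<in> ball 0 r \<Longrightarrow> cmod (f z) \<le> B"
    and exp: "f has_fps_expansion F"
  shows "cmod (F $ n) * r ^ n \<le> B"
proof (rule tendsto_upperbound)
  show "((\<lambda>s. cmod (F $ n) * s ^ n) \<longlongrightarrow> cmod (F $ n) * r ^ n) (at_left r)"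
    by (intro tendsto_intros)
  show "\<forall>\<^sub>F s in at_left r. cmod (F $ n) * s ^ n \<le> B"
    using eventually_at_left_real[OF r]
  proof eventually_elim
    case (elim s)
    then have s: "0 < s" "s < r" by auto
    have "cmod ((deriv ^^ n) f 0) \<le> fact n * B / s ^ n"
    proof (rule Cauchy_inequality)
      show "f holomorphic_on ball 0 s"
        using s by (intro holomorphic_on_subset[OF hol]) auto
      show "continuous_on (cball 0 s) f"
        using s by (intro holomorphic_on_imp_continuous_on holomorphic_on_subset[OF hol]) auto
      show "cmod (f z) \<le> B" if "cmod (0 - z) = s" for z
        using that s by (intro bound) auto
    qed (use s in auto)
    then show ?case
      using s by (simp add: fps_nth_fps_expansion[OF exp] norm_divide field_simps)
  qed
qed simp

lemma norm_diff_one_less_norm_add_one: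
  fixes u :: complex
  assumes "Re u > 0"
  shows "cmod (u - 1) < cmod (u + 1)"
proof -
  have "cmod (u - 1) ^ 2 < cmod (u + 1) ^ 2"
    using assms unfolding cmod_power2 by (simp add: power2_eq_square algebra_simps)
  then show ?thesis by (rule power_less_imp_less_base) simp
qed

lemma fps_nth_Cayley_transform:
  fixes P :: "'a::field_char_0 fps"
  assumes low: "fps_X ^ n dvd P - 1" and n: "n > 0"
  shows "((P - 1) / (P + 1)) $ n = P $ n / 2"
proof -
  obtain S where S: "P - 1 = fps_X ^ n * S"
    using low by (elim dvdE)
  have P0: "P $ 0 = 1"
    using low n by (simp add: fps_X_power_dvd_iff)
  have "(P - 1) / (P + 1) = fps_X ^ n * (S * inverse (P + 1))"
    using P0 by (simp add: fps_divide_unit S mult.assoc)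
  then have "((P - 1) / (P + 1)) $ n = S $ 0 * inverse ((P + 1) $ 0)"
    by (simp only: fps_X_power_mult_nth fps_mult_nth_0 fps_inverse_nth_0) simp
  also have "S $ 0 = (fps_X ^ n * S) $ n"
    by (simp only: fps_X_power_mult_nth) simp
  also have "\<dots> = P $ n"
    using n by (simp flip: S)
  also have "(P + 1) $ 0 = 2"
    using P0 by simp
  finally show ?thesis
    by (simp only: divide_inverse)
qed

lemma Caratheodory_coeff_bound_lacunary:
  fixes p :: "complex \<Rightarrow> complex"
  assumes hol: "p holomorphic_on ball 0 1" and Re_pos: "\<And>z. z \<in> ball 0 1 \<Longrightarrow> Re (p z) > 0"
    and exp: "p has_fps_expansion P" and low: "fps_X ^ n dvd P - 1" and n: "n > 0"
  shows "cmod (P $ n) \<le> 2"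
proof -
  define w where "w z = (p z - 1) / (p z + 1)" for z
  have nonzero: "p z + 1 \<noteq> 0" if "z \<in> ball 0 1" for z
  proof -
    have "Re (p z + 1) > 0"
      using Re_pos[OF that] by simp
    then show ?thesis
      by (metis zero_complex.sel(1) less_irrefl)
  qed
  have "w holomorphic_on ball 0 1"
    unfolding w_def using hol nonzero by (intro holomorphic_intros) auto
  moreover have "cmod (w z) \<le> 1" if "z \<in> ball 0 1" for z
  proof -
    have "cmod (p z - 1) < cmod (p z + 1)"
      using Re_pos[OF that] by (rule norm_diff_one_less_norm_add_one)
    then show ?thesis
      unfolding w_def norm_divide by (subst divide_le_eq_1_pos) auto
  qed
  moreover have "P $ 0 = 1"
    using low n by (simp add: fps_X_power_dvd_iff)
  then have "w has_fps_expansion (P - 1) / (P + 1)"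
    unfolding w_def
    by (intro has_fps_expansion_divide' has_fps_expansion_diff has_fps_expansion_add exp
        has_fps_expansion_1) simp
  ultimately have "cmod (((P - 1) / (P + 1)) $ n) \<le> 1"
    using norm_fps_nth_bound[of w 1 1] by simp
  then show ?thesis
    by (simp add: fps_nth_Cayley_transform[OF low n] norm_divide)
qed

lemma sum_root_unity_powers:
  assumes n: "n > 0"
  shows "(\<Sum>k<n. exp (2 * of_real pi * \<i> / of_nat n) ^ (k * j)) = (if n dvd j then of_nat n else 0)"
proof -
  define \<zeta> :: complex where "\<zeta> = exp (2 * of_real pi * \<i> / of_nat n)"
  have \<zeta>_power: "\<zeta> ^ j = exp (2 * of_real pi * \<i> * of_nat j / of_nat n)" for j
    by (simp add: \<zeta>_def exp_of_nat_mult[symmetric] field_simps)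
  have "(\<Sum>k<n. \<zeta> ^ (k * j)) = (\<Sum>k<n. (\<zeta> ^ j) ^ k)"
    by (simp add: power_mult[symmetric] mult.commute)
  also have "\<dots> = (if n dvd j then of_nat n else 0)"
  proof (cases "n dvd j")
    case True
    then show ?thesis
      using complex_root_unity_eq_1[of n j] n by (simp add: \<zeta>_power)
  next
    case False
    have "(\<zeta> ^ j) ^ n = 1"
      using complex_root_unity[of n j] n by (simp add: \<zeta>_power)
    with False show ?thesis
      using complex_root_unity_eq_1[of n j] n by (simp add: \<zeta>_power sum_gp_strict)
  qed
  finally show ?thesis by (simp add: \<zeta>_def)
qed

lemma has_fps_expansion_root_unity_average:
  assumes exp: "p has_fps_expansion P" and n: "n > 0"
  defines "\<zeta> \<equiv> exp (2 * of_real pi * \<i> / of_nat n)"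
  shows "(\<lambda>z. inverse (of_nat n) * (\<Sum>k<n. p (\<zeta> ^ k * z)))
           has_fps_expansion Abs_fps (\<lambda>j. if n dvd j then P $ j else 0)"
proof -
  have "(\<lambda>z. p (\<zeta> ^ k * z)) has_fps_expansion (P oo (fps_const (\<zeta> ^ k) * fps_X))" for k
    using has_fps_expansion_compose[OF exp, of "\<lambda>z. \<zeta> ^ k * z"]
    by (simp add: o_def fps_expansion_intros)
  then have "(\<lambda>z. inverse (of_nat n) * (\<Sum>k<n. p (\<zeta> ^ k * z))) has_fps_expansion
               (fps_const (inverse (of_nat n)) * (\<Sum>k<n. P oo (fps_const (\<zeta> ^ k) * fps_X)))"
    by (intro fps_expansion_intros)
  also have "fps_const (inverse (of_nat n)) * (\<Sum>k<n. P oo (fps_const (\<zeta> ^ k) * fps_X))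
      = Abs_fps (\<lambda>j. if n dvd j then P $ j else 0)"
  proof (rule fps_ext)
    fix j
    have "(fps_const (inverse (of_nat n)) * (\<Sum>k<n. P oo (fps_const (\<zeta> ^ k) * fps_X))) $ j
        = inverse (of_nat n) * (\<Sum>k<n. \<zeta> ^ (k * j)) * P $ j"
      by (simp add: fps_sum_nth power_mult sum_distrib_right mult.assoc)
    also have "(\<Sum>k<n. \<zeta> ^ (k * j)) = (if n dvd j then of_nat n else 0)"
      unfolding \<zeta>_def by (rule sum_root_unity_powers[OF n])
    finally show "(fps_const (inverse (of_nat n)) * (\<Sum>k<n. P oo (fps_const (\<zeta> ^ k) * fps_X))) $ j
        = Abs_fps (\<lambda>j. if n dvd j then P $ j else 0) $ j"
      using n by simp
  qed
  finally show ?thesis .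
qed

lemma Caratheodory_coeff_bound:
  fixes p :: "complex \<Rightarrow> complex"
  assumes hol: "p holomorphic_on ball 0 1" and Re_pos: "\<And>z. z \<in> ball 0 1 \<Longrightarrow> Re (p z) > 0"
    and exp: "p has_fps_expansion P" and P0: "P $ 0 = 1" and n: "n > 0"
  shows "cmod (P $ n) \<le> 2"
proof -
  define \<zeta> :: complex where "\<zeta> = exp (2 * of_real pi * \<i> / of_nat n)"
  define q where "q z = inverse (of_nat n) * (\<Sum>k<n. p (\<zeta> ^ k * z))" for z
  define Q where "Q = Abs_fps (\<lambda>j. if n dvd j then P $ j else 0)"
  have "cmod \<zeta> = 1"
    by (simp add: \<zeta>_def)
  then have rotate: "\<zeta> ^ k * z \<in> ball 0 1" if "z \<in> ball 0 1" for k z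
    using that by (simp add: norm_mult norm_power)
  have "q holomorphic_on ball 0 1"
    unfolding q_def using rotate
    by (intro holomorphic_intros holomorphic_on_compose_gen[OF _ hol, unfolded o_def]) auto
  moreover have "Re (q z) > 0" if "z \<in> ball 0 1" for z
  proof -
    have "(\<Sum>k<n. Re (p (\<zeta> ^ k * z))) > 0"
      using n Re_pos[OF rotate[OF that]] by (intro sum_pos) auto
    then show ?thesis
      using n by (simp add: q_def Re_sum zero_less_mult_iff)
  qed
  moreover have "q has_fps_expansion Q"
    unfolding q_def Q_def \<zeta>_def using exp n by (rule has_fps_expansion_root_unity_average)
  moreover have "fps_X ^ n dvd Q - 1"
    using P0 by (auto simp: fps_X_power_dvd_iff Q_def dest: dvd_imp_le)
  ultimately have "cmod (Q $ n) \<le> 2"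
    using n by (intro Caratheodory_coeff_bound_lacunary[of q]) auto
  then show ?thesis
    by (simp add: Q_def)
qed

section \<open>Taylor coefficients of J for \<delta> = 0\<close>

definition J_weight :: "real \<Rightarrow> real \<Rightarrow> nat \<Rightarrow> real" where
  "J_weight lam \<gamma> n = 1 + n * (lam + \<gamma>) + lam * \<gamma> * ((n + 1)\<^sup>2 + 1)"

lemma J_weight_ge_1: "lam \<ge> 0 \<Longrightarrow> \<gamma> \<ge> 0 \<Longrightarrow> J_weight lam \<gamma> n \<ge> 1"
  by (simp add: J_weight_def)

lemma J_fun_0_eq:
  "J_fun m \<tau> lam \<gamma> 0 h =
     (\<lambda>z. 1 + (1 / \<tau>) * (of_real ((1 - lam) * (1 - \<gamma>)) * div_z h z
                         + of_real (lam * (\<gamma> + 1) + \<gamma>) * deriv h z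
                         + of_real (lam * \<gamma>) * (z * deriv (deriv h) z - 2) - 1))"
  by (simp add: J_fun_def ruscheweyh_def fun_eq_iff)

lemma div_z_has_fps_expansion:
  assumes exp: "h has_fps_expansion H" and sub: "1 \<le> subdegree H"
  shows "div_z h has_fps_expansion fps_shift 1 H"
proof -
  have "deriv h 0 = H $ 1"
    using fps_nth_fps_expansion[OF exp, of 1] by simp
  then have "div_z h = (\<lambda>z. if z = 0 then H $ 1 else h z / z ^ 1)"
    by (auto simp: div_z_def)
  then show ?thesis
    using has_fps_expansion_shift[OF exp sub refl] by simp
qed

lemma div_z_holomorphic:
  assumes hol: "h holomorphic_on ball 0 r" and exp: "h has_fps_expansion H" and sub: "1 \<le> subdegree H"
  shows "div_z h holomorphic_on ball 0 r"
proof (rule no_isolated_singularity'[where K = "{0}"])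
  have "continuous (at 0 within ball 0 r) (div_z h)"
    by (rule has_fps_expansion_imp_continuous[OF div_z_has_fps_expansion[OF exp sub]])
  then show "\<And>z. z \<in> {0} \<Longrightarrow> (div_z h \<longlongrightarrow> div_z h z) (at z within ball 0 r)"
    by (auto simp: continuous_within)
  have "(\<lambda>z. h z / z) holomorphic_on ball 0 r - {0}"
    by (intro holomorphic_intros holomorphic_on_subset[OF hol]) auto
  then show "div_z h holomorphic_on ball 0 r - {0}"
    by (rule holomorphic_transform) (auto simp: div_z_def)
qed auto

lemma J_fun_has_fps_expansion:
  assumes exp: "h has_fps_expansion H" and H0: "H $ 0 = 0" and H1: "H $ 1 = 1"
  shows "J_fun m \<tau> lam \<gamma> 0 h has_fps_expansion
           Abs_fps (\<lambda>n. if n = 0 then 1 else of_real (J_weight lam \<gamma> n) * H $ Suc n / \<tau>)"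
proof -
  define A B C :: complex where "A = of_real ((1 - lam) * (1 - \<gamma>))"
    and "B = of_real (lam * (\<gamma> + 1) + \<gamma>)" and "C = of_real (lam * \<gamma>)"
  define E where "E = 1 + fps_const (1 / \<tau>) * (fps_const A * fps_shift 1 H + fps_const B * fps_deriv H
                        + fps_const C * (fps_X * fps_deriv (fps_deriv H) - 2) - 1)"
  have "1 \<le> subdegree H"
    using H0 H1 by (intro subdegree_geI) auto
  then have "J_fun m \<tau> lam \<gamma> 0 h has_fps_expansion E"
    unfolding J_fun_0_eq E_def A_def B_def C_def
    by (intro fps_expansion_intros div_z_has_fps_expansion exp)
  also have "E = Abs_fps (\<lambda>n. if n = 0 then 1 else of_real (J_weight lam \<gamma> n) * H $ Suc n / \<tau>)"
  proof (rule fps_ext)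
    fix n
    show "E $ n = Abs_fps (\<lambda>n. if n = 0 then 1 else of_real (J_weight lam \<gamma> n) * H $ Suc n / \<tau>) $ n"
    proof (cases n)
      case 0
      have "A + B - 2 * C - 1
          = of_real ((1 - lam) * (1 - \<gamma>) + (lam * (\<gamma> + 1) + \<gamma>) - 2 * (lam * \<gamma>) - 1)"
        by (simp add: A_def B_def C_def)
      also have "\<dots> = 0"
        by (simp add: algebra_simps)
      finally have "A + B - 2 * C - 1 = 0" .
      then show ?thesis
        using 0 H1 by (simp add: E_def algebra_simps flip: add_divide_distrib)
    next
      case (Suc k)
      have "E $ n = (A + B * of_nat (Suc n) + C * (of_nat n * of_nat (Suc n))) * H $ Suc n / \<tau>"
        using Suc by (simp add: E_def fps_numeral_nth algebra_simps add_divide_distrib)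
      also have "A + B * of_nat (Suc n) + C * (of_nat n * of_nat (Suc n)) = of_real (J_weight lam \<gamma> n)"
        by (simp add: A_def B_def C_def J_weight_def algebra_simps power2_eq_square)
      finally show ?thesis
        using Suc by simp
    qed
  qed
  finally show ?thesis .
qed

lemma J_fun_holomorphic:
  assumes hol: "h holomorphic_on ball 0 r" and exp: "h has_fps_expansion H" and sub: "1 \<le> subdegree H"
  shows "J_fun m \<tau> lam \<gamma> 0 h holomorphic_on ball 0 r"
  unfolding J_fun_0_eq
  by (intro holomorphic_intros div_z_holomorphic[OF hol exp sub] holomorphic_deriv hol) auto

lemma J_fun_coeff_bound:
  fixes h :: "complex \<Rightarrow> complex"
  assumes hol: "h holomorphic_on unit_disc" and exp: "h has_fps_expansion H"
    and H0: "H $ 0 = 0" and H1: "H $ 1 = 1"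
    and Re_J: "\<forall>z\<in>unit_disc. Re (J_fun m \<tau> lam \<gamma> 0 h z) > \<beta>"
    and \<beta>: "\<beta> < 1" and \<tau>: "\<tau> \<noteq> 0" and n: "n > 0"
  shows "\<bar>J_weight lam \<gamma> n\<bar> * cmod (H $ Suc n) \<le> 2 * cmod \<tau> * (1 - \<beta>)"
proof -
  define c :: complex where "c = of_real (1 / (1 - \<beta>))"
  define p where "p z = c * (J_fun m \<tau> lam \<gamma> 0 h z - of_real \<beta>)" for z
  define P where "P = fps_const c * (Abs_fps (\<lambda>n. if n = 0 then 1
                        else of_real (J_weight lam \<gamma> n) * H $ Suc n / \<tau>) - fps_const (of_real \<beta>))"
  have "1 \<le> subdegree H"
    using H0 H1 by (intro subdegree_geI) auto
  then have "p holomorphic_on unit_disc"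
    unfolding p_def by (intro holomorphic_intros J_fun_holomorphic[OF hol exp])
  moreover have "Re (p z) > 0" if "z \<in> unit_disc" for z
    using Re_J that \<beta> by (simp add: p_def c_def)
  moreover have "p has_fps_expansion P"
    unfolding p_def[abs_def] P_def
    by (intro fps_expansion_intros J_fun_has_fps_expansion[OF exp H0 H1])
  moreover have "P $ 0 = 1"
    using \<beta> by (simp add: P_def c_def field_simps)
  ultimately have "cmod (P $ n) \<le> 2"
    using n by (intro Caratheodory_coeff_bound[of p]) auto
  moreover have "cmod (P $ n) = \<bar>J_weight lam \<gamma> n\<bar> * cmod (H $ Suc n) / (cmod \<tau> * (1 - \<beta>))"
  proof -
    have "cmod (1 - of_real \<beta>) = 1 - \<beta>"
      using \<beta> by (metis abs_of_pos diff_gt_0_iff_gt norm_of_real of_real_1 of_real_diff)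
    then show ?thesis
      using n by (simp add: P_def c_def norm_mult norm_divide)
  qed
  ultimately show ?thesis
    using \<beta> \<tau> by (simp add: divide_le_eq mult.commute mult.left_commute)
qed

section \<open>The coefficients of f and of its inverse\<close>

definition mfold_fps :: "nat \<Rightarrow> (nat \<Rightarrow> complex) \<Rightarrow> complex fps" where
  "mfold_fps m a = Abs_fps (\<lambda>n. if n = 1 then 1 else if 1 < n \<and> m dvd n - 1 then a n else 0)"

lemma mfold_expansion_has_fps_expansion:
  assumes m: "m > 0" and mf: "mfold_expansion m a f"
  shows "f has_fps_expansion mfold_fps m a"
proof (rule has_fps_expansionI)
  have "eventually (\<lambda>z. z \<in> unit_disc) (nhds 0)"
    by (intro eventually_nhds_in_open) auto
  then show "\<forall>\<^sub>F z in nhds 0. (\<lambda>n. mfold_fps m a $ n * z ^ n) sums f z"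
  proof eventually_elim
    case (elim z)
    define T where "T n = (if 1 < n \<and> m dvd n - 1 then a n * z ^ n else 0)" for n
    define \<phi> where "\<phi> k = m * Suc k + 1" for k
    have "strict_mono \<phi>"
      unfolding \<phi>_def using m by (intro strict_monoI) auto
    moreover have "(\<lambda>k. T (\<phi> k)) sums (f z - z)"
      using mf elim m by (simp add: mfold_expansion_def T_def \<phi>_def)
    moreover have "T n = 0" if "n \<notin> range \<phi>" for n
    proof (rule ccontr)
      assume "T n \<noteq> 0"
      then obtain q where "1 < n" "n - 1 = m * q"
        by (auto simp: T_def split: if_splits)
      then have "n = \<phi> (q - 1)"
        by (cases q) (auto simp: \<phi>_def)
      with that show False by auto
    qed
    ultimately have "T sums (f z - z)"
      using sums_mono_reindex by blast
    then have "(\<lambda>n. T n + (if n = 1 then z else 0)) sums (f z - z + z)"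
      using sums_single[of 1 "\<lambda>_. z"] by (intro sums_add) simp_all
    moreover have "(\<lambda>n. T n + (if n = 1 then z else 0)) = (\<lambda>n. mfold_fps m a $ n * z ^ n)"
      by (auto simp: T_def mfold_fps_def fun_eq_iff)
    ultimately show ?case by simp
  qed
qed

lemma mfold_fps_initial_terms:
  assumes m: "m > 0"
  shows "fps_X ^ (2*m+2) dvd
           mfold_fps m a - (fps_X + fps_const (a (m+1)) * fps_X ^ (m+1)
                              + fps_const (a (2*m+1)) * fps_X ^ (2*m+1))"
proof -
  have "mfold_fps m a $ j = (if j = 1 then 1 else if j = m + 1 then a (m+1)
                             else if j = 2*m+1 then a (2*m+1) else 0)" if "j < 2*m+2" for j
  proof -
    have "m dvd j - 1 \<longleftrightarrow> j - 1 = 0 \<or> j - 1 = m \<or> j - 1 = 2*m"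
    proof
      assume "m dvd j - 1"
      then obtain q where q: "j - 1 = m * q" by (elim dvdE)
      have "m * q < m * 3"
        using q that m by linarith
      then have "q < 3"
        by simp
      then show "j - 1 = 0 \<or> j - 1 = m \<or> j - 1 = 2*m"
        using q by (auto simp: less_Suc_eq numeral_3_eq_3)
    qed auto
    then show ?thesis
      using m by (auto simp: mfold_fps_def)
  qed
  then show ?thesis
    unfolding fps_X_power_dvd_iff using m by auto
qed

lemma inverse_extension_fps:
  assumes hol: "f holomorphic_on unit_disc" and inv: "inverse_extension f g"
    and exp: "f has_fps_expansion F" and F0: "F $ 0 = 0"
  shows "g has_fps_expansion fps_expansion g 0" and "fps_expansion g 0 oo F = fps_X"
proof -
  have "g holomorphic_on unit_disc"
    and g_f: "\<And>z. z \<in> unit_disc \<Longrightarrow> f z \<in> unit_disc \<Longrightarrow> g (f z) = z"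
    using inv by (auto simp: inverse_extension_def)
  then have "g analytic_on unit_disc"
    by (simp add: analytic_on_open)
  then have "g analytic_on {0}"
    by (rule analytic_on_subset) simp
  then show g_exp: "g has_fps_expansion fps_expansion g 0"
    by (rule analytic_at_imp_has_fps_expansion_0)
  have "f 0 = 0"
    using has_fps_expansion_imp_0_eq_fps_nth_0[OF exp] F0 by simp
  then have "fps_expansion g 0 $ 0 = 0"
    using has_fps_expansion_imp_0_eq_fps_nth_0[OF g_exp] g_f[of 0] by simp
  have comp: "(g \<circ> f) has_fps_expansion (fps_expansion g 0 oo F)"
    by (rule has_fps_expansion_compose[OF g_exp exp F0])
  have "open (unit_disc \<inter> f -` unit_disc)"
    by (rule continuous_open_preimage[OF holomorphic_on_imp_continuous_on[OF hol]]) auto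
  then have "eventually (\<lambda>z. z \<in> unit_disc \<inter> f -` unit_disc) (nhds 0)"
    using \<open>f 0 = 0\<close> by (intro eventually_nhds_in_open) auto
  moreover have "eventually (\<lambda>z. eval_fps (fps_expansion g 0 oo F) z = (g \<circ> f) z) (nhds 0)"
    using comp by (simp add: has_fps_expansion_def)
  ultimately have "eventually (\<lambda>z. eval_fps (fps_expansion g 0 oo F) z = eval_fps fps_X z) (nhds 0)"
    by eventually_elim (simp add: g_f)
  then show "fps_expansion g 0 oo F = fps_X"
    using comp by (intro eval_fps_eqD) (auto simp: has_fps_expansion_def)
qed

lemma mfold_inverse_coeffs:
  assumes m: "m > 0" and hol: "f holomorphic_on unit_disc" and inv: "inverse_extension f g"
    and mf: "mfold_expansion m a f"
  defines "G \<equiv> fps_expansion g 0"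
  shows "g has_fps_expansion G" and "G $ 0 = 0" and "G $ 1 = 1"
    and "G $ (2*m+1) = of_nat (m+1) * (a (m+1))\<^sup>2 - a (2*m+1)"
proof -
  have f_exp: "f has_fps_expansion mfold_fps m a"
    using m mf by (rule mfold_expansion_has_fps_expansion)
  have "mfold_fps m a $ 0 = 0"
    by (simp add: mfold_fps_def)
  from inverse_extension_fps[OF hol inv f_exp this]
  have g_exp: "g has_fps_expansion G" and GF: "G oo mfold_fps m a = fps_X"
    by (simp_all add: G_def)
  show "g has_fps_expansion G"
    by (rule g_exp)
  have "fps_X ^ (2*m+2) dvd
               G - (fps_X - fps_const (a (m+1)) * fps_X ^ (m+1)
                    + fps_const (of_nat (m+1) * (a (m+1))\<^sup>2 - a (2*m+1)) * fps_X ^ (2*m+1))"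
    using GF mfold_fps_initial_terms[OF m] m by (intro fps_compose_left_inverse_coeffs) auto
  then show "G $ 0 = 0" and "G $ 1 = 1" and "G $ (2*m+1) = of_nat (m+1) * (a (m+1))\<^sup>2 - a (2*m+1)"
    using m unfolding fps_X_power_dvd_iff by (auto dest!: spec[of _ 0] spec[of _ 1] spec[of _ "2*m+1"])
qed

lemma norm_le_sqrt_of_bounds:
  fixes x y :: complex and c K :: real
  assumes c: "c > 0" and N: "N > 0"
    and y: "c * cmod y \<le> 2 * K" and xy: "c * cmod (of_nat N * x\<^sup>2 - y) \<le> 2 * K"
  shows "cmod x \<le> 2 * sqrt (K / (N * c))"
proof -
  have "c * (N * cmod x ^ 2) = c * cmod (of_nat N * x\<^sup>2 - y + y)"
    by (simp add: norm_mult norm_power)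
  also have "\<dots> \<le> c * (cmod (of_nat N * x\<^sup>2 - y) + cmod y)"
    using c by (intro mult_left_mono norm_triangle_ineq) auto
  finally have "cmod x ^ 2 \<le> 2\<^sup>2 * (K / (N * c))"
    using y xy c N by (simp add: field_simps)
  then show ?thesis
    by (metis real_sqrt_le_iff real_sqrt_mult real_sqrt_unique norm_ge_zero zero_le_numeral real_sqrt_abs abs_numeral)
qed

theorem corollary1:
  fixes m :: nat and \<tau> :: complex and lam \<gamma> \<beta> :: real
    and f :: "complex \<Rightarrow> complex" and a :: "nat \<Rightarrow> complex"
  assumes "m \<ge> 1" and "lam \<ge> 0" and "0 \<le> \<gamma>" and "\<gamma> \<le> 1"
    and "0 \<le> \<beta>" and "\<beta> < 1" and "\<tau> \<noteq> 0"
    and "mfold_expansion m a f"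
    and "Theta m \<tau> lam \<gamma> 0 \<beta> f"
  shows "cmod (a (m + 1)) \<le>
           min (2 * cmod \<tau> * (1 - \<beta>) / (1 + m * (lam + \<gamma>) + lam * \<gamma> * ((m + 1)^2 + 1)))
               (2 * sqrt (cmod \<tau> * (1 - \<beta>) /
                  ((m + 1) * (1 + 2 * m * (lam + \<gamma>) + lam * \<gamma> * ((2 * m + 1)^2 + 1))))) \<and>
         cmod (a (2 * m + 1)) \<le>
           2 * cmod \<tau> * (1 - \<beta>) / (1 + 2 * m * (lam + \<gamma>) + lam * \<gamma> * ((2 * m + 1)^2 + 1))"
proof -
  have m: "m > 0" and "2 * m > 0"
    using assms(1) by simp_all
  obtain g where hol_f: "f holomorphic_on unit_disc" and inv: "inverse_extension f g"
    and Re_f: "\<forall>z\<in>unit_disc. Re (J_fun m \<tau> lam \<gamma> 0 f z) > \<beta>"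
    and Re_g: "\<forall>w\<in>unit_disc. Re (J_fun m \<tau> lam \<gamma> 0 g w) > \<beta>"
    using assms(9) by (auto simp: Theta_def class_A_def)
  have hol_g: "g holomorphic_on unit_disc"
    using inv by (simp add: inverse_extension_def)
  have f_exp: "f has_fps_expansion mfold_fps m a"
    using m assms(8) by (rule mfold_expansion_has_fps_expansion)
  have F: "mfold_fps m a $ 0 = 0" "mfold_fps m a $ 1 = 1"
    "mfold_fps m a $ Suc m = a (m+1)" "mfold_fps m a $ Suc (2*m) = a (2*m+1)"
    using m by (simp_all add: mfold_fps_def)
  note G = mfold_inverse_coeffs[OF m hol_f inv assms(8)]
  define c1 c2 where "c1 = J_weight lam \<gamma> m" and "c2 = J_weight lam \<gamma> (2*m)"
  have "c1 \<ge> 1" "c2 \<ge> 1"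
    using assms(2,3) by (simp_all add: c1_def c2_def J_weight_ge_1)
  have "c1 * cmod (a (m+1)) \<le> 2 * cmod \<tau> * (1 - \<beta>)"
    using J_fun_coeff_bound[OF hol_f f_exp F(1,2) Re_f assms(6,7) m] F \<open>c1 \<ge> 1\<close> by (simp add: c1_def)
  moreover have a2: "c2 * cmod (a (2*m+1)) \<le> 2 * (cmod \<tau> * (1 - \<beta>))"
    using J_fun_coeff_bound[OF hol_f f_exp F(1,2) Re_f assms(6,7) \<open>2 * m > 0\<close>] F \<open>c2 \<ge> 1\<close>
    by (simp add: c2_def)
  moreover have "c2 * cmod (of_nat (m+1) * (a (m+1))\<^sup>2 - a (2*m+1)) \<le> 2 * (cmod \<tau> * (1 - \<beta>))"
    using J_fun_coeff_bound[OF hol_g G(1-3) Re_g assms(6,7) \<open>2 * m > 0\<close>] G(4) \<open>c2 \<ge> 1\<close>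
    by (simp add: c2_def)
  then have "cmod (a (m+1)) \<le> 2 * sqrt (cmod \<tau> * (1 - \<beta>) / ((m+1) * c2))"
    using a2 \<open>c2 \<ge> 1\<close> by (intro norm_le_sqrt_of_bounds) auto
  moreover have "c1 = 1 + m * (lam + \<gamma>) + lam * \<gamma> * ((m + 1)^2 + 1)"
    and "c2 = 1 + 2 * m * (lam + \<gamma>) + lam * \<gamma> * ((2 * m + 1)^2 + 1)"
    by (simp_all add: c1_def c2_def J_weight_def)
  ultimately show ?thesis
    using \<open>c1 \<ge> 1\<close> \<open>c2 \<ge> 1\<close> by (simp add: field_simps)
qed

end
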